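(* If $\mathcal{T}$ is a single-elimination tournament with at least $2$ players and $N$ total brackets, then for every scoring system $\sigma$ we have $\mathrm{res}(\mathcal{T},\sigma)>\tfrac14 N$.
   Context: A single-elimination tournament is a finite directed graph $\mathcal{T}$ such that: (a) $\mathcal{T}$ has exactly one sink (vertex with no out-neighbours); (b) every non-sink vertex has exactly one out-neighbour; (c) $\mathcal{T}$ has no directed cycles; (d) $|N^-(v)|\ne 1$ for every vertex $v$, where $N^-(v)$ denotes the set of in-neighbours of $v$. The players $P(\mathcal{T})$ are the sources and the matches are $M(\mathcal{T})=V(\mathcal{T})\setminus P(\mathcal{T})$. A bracket is a function $B:V(\mathcal{T})\to P(\mathcal{T})$ with $B(a)=a$ for every player $a$ and $B(x)\in\{B(u):u\in N^-(x)\}$ for every match $x$. A scoring system is any function $\sigma:M(\mathcal{T})\to\mathbb{R}_{>0}$. For brackets $B,B'$ let $\mathrm{score}_\sigma(B,B')=\sum_{x\in M(\mathcal{T}):\,B(x)=B'(x)}\sigma(x)$. A set of brackets $\mathcal{B}$ is $\sigma$-resolving if for every pair of distinct brackets $B\ne B'$ there is $B_i\in\mathcal{B}$ with $\mathrm{score}_\sigma(B_i,B)\ne\mathrm{score}_\sigma(B_i,B')$. $\mathrm{res}(\mathcal{T},\sigma)$ is the minimum $r$ such that every set of $r$ brackets is $\sigma$-resolving. *)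

theory Defs
  imports Complex_Main
begin

definition out_nbrs :: "('v \<times> 'v) set \<Rightarrow> 'v \<Rightarrow> 'v set" where
  "out_nbrs E v = {w. (v, w) \<in> E}"

definition in_nbrs :: "('v \<times> 'v) set \<Rightarrow> 'v \<Rightarrow> 'v set" where
  "in_nbrs E v = {u. (u, v) \<in> E}"

definition is_sink :: "'v set \<Rightarrow> ('v \<times> 'v) set \<Rightarrow> 'v \<Rightarrow> bool" where
  "is_sink V E v \<longleftrightarrow> v \<in> V \<and> out_nbrs E v = {}"

definition single_elim_tournament :: "'v set \<Rightarrow> ('v \<times> 'v) set \<Rightarrow> bool" where
  "single_elim_tournament V E \<longleftrightarrow>
     finite V \<and> E \<subseteq> V \<times> V \<and>
     (\<exists>!v. is_sink V E v) \<and>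
     (\<forall>v\<in>V. \<not> is_sink V E v \<longrightarrow> card (out_nbrs E v) = 1) \<and>
     acyclic E \<and>
     (\<forall>v\<in>V. card (in_nbrs E v) \<noteq> 1)"

definition players :: "'v set \<Rightarrow> ('v \<times> 'v) set \<Rightarrow> 'v set" where
  "players V E = {v \<in> V. in_nbrs E v = {}}"

definition matches :: "'v set \<Rightarrow> ('v \<times> 'v) set \<Rightarrow> 'v set" where
  "matches V E = V - players V E"

text \<open>A bracket is a function V \<rightarrow> players; outside V it is fixed to undefined
 so that brackets correspond exactly to functions on V.\<close>
definition bracket :: "'v set \<Rightarrow> ('v \<times> 'v) set \<Rightarrow> ('v \<Rightarrow> 'v) \<Rightarrow> bool" where
  "bracket V E B \<longleftrightarrow>
     (\<forall>x. x \<notin> V \<longrightarrow> B x = undefined) \<and>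
     (\<forall>x\<in>V. B x \<in> players V E) \<and>
     (\<forall>a\<in>players V E. B a = a) \<and>
     (\<forall>x\<in>matches V E. B x \<in> B ` in_nbrs E x)"

definition brackets :: "'v set \<Rightarrow> ('v \<times> 'v) set \<Rightarrow> ('v \<Rightarrow> 'v) set" where
  "brackets V E = {B. bracket V E B}"

definition scoring_system :: "'v set \<Rightarrow> ('v \<times> 'v) set \<Rightarrow> ('v \<Rightarrow> real) \<Rightarrow> bool" where
  "scoring_system V E \<sigma> \<longleftrightarrow> (\<forall>x\<in>matches V E. \<sigma> x > 0)"

definition score :: "'v set \<Rightarrow> ('v \<times> 'v) set \<Rightarrow> ('v \<Rightarrow> real) \<Rightarrow> ('v \<Rightarrow> 'v) \<Rightarrow> ('v \<Rightarrow> 'v) \<Rightarrow> real" where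
  "score V E \<sigma> B B' = (\<Sum>x\<in>{x\<in>matches V E. B x = B' x}. \<sigma> x)"

definition resolving :: "'v set \<Rightarrow> ('v \<times> 'v) set \<Rightarrow> ('v \<Rightarrow> real) \<Rightarrow> ('v \<Rightarrow> 'v) set \<Rightarrow> bool" where
  "resolving V E \<sigma> S \<longleftrightarrow>
     (\<forall>B\<in>brackets V E. \<forall>B'\<in>brackets V E. B \<noteq> B' \<longrightarrow>
        (\<exists>Bi\<in>S. score V E \<sigma> Bi B \<noteq> score V E \<sigma> Bi B'))"

definition res :: "'v set \<Rightarrow> ('v \<times> 'v) set \<Rightarrow> ('v \<Rightarrow> real) \<Rightarrow> nat" where
  "res V E \<sigma> = (LEAST r. \<forall>S. S \<subseteq> brackets V E \<longrightarrow> card S = r \<longrightarrow> resolving V E \<sigma> S)"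

end

(*
  Let s be the final, k >= 2 the number of its in-neighbours and N the number of brackets.
  Handing the final to the winner of another in-neighbour is injective on brackets, so each of
  the k subtrees below s supplies the champion of exactly N/k brackets; hence below an
  in-neighbour u with m players under it some player is champion of at most N/(k m) brackets.

  Pick such rare champions p1, p2 below distinct in-neighbours u1, u2. Some bracket has p1 beat
  p2 in the final, and handing that final to p2 gives a second bracket differing only at s.
  Every bracket whose champion is neither p1 nor p2 scores the two equally under any scoring
  system, so res exceeds the number of such brackets. For k >= 3, or
  k = 2 with u2 a match (m >= 2), p1 and p2 are champions of at most 3N/4 brackets. Otherwise
  the tournament has two players, N = 2 and res >= 1.
*)
theory Submission
  imports Defs "HOL-Library.FuncSet"
begin

lemma card_ge_twoE:
  assumes "card A \<ge> 2"
  obtains a b where "a \<in> A" "b \<in> A" "a \<noteq> b"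
proof -
  have "finite A"
    using assms card_ge_0_finite by force
  with assms show thesis
    using that card_le_Suc0_iff_eq[of A] by force
qed

lemma card_less_res:
  assumes "finite (brackets V E)" and "S\<^sub>0 \<subseteq> brackets V E"
    and "\<And>S. S \<subseteq> S\<^sub>0 \<Longrightarrow> \<not> resolving V E \<sigma> S"
  shows "card S\<^sub>0 < res V E \<sigma>"
proof -
  let ?all_resolving = "\<lambda>r. \<forall>S. S \<subseteq> brackets V E \<longrightarrow> card S = r \<longrightarrow> resolving V E \<sigma> S"
  have "?all_resolving (Suc (card (brackets V E)))"
    using card_mono[OF assms(1)] by (metis Suc_n_not_le_n)
  then have "?all_resolving (res V E \<sigma>)"
    unfolding res_def by (rule LeastI)
  show ?thesis
  proof (rule ccontr)
    assume "\<not> card S\<^sub>0 < res V E \<sigma>"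
    then obtain S where "S \<subseteq> S\<^sub>0" "card S = res V E \<sigma>"
      using obtain_subset_with_card_n[of "res V E \<sigma>" S\<^sub>0] by force
    then show False
      using assms(2,3) \<open>?all_resolving (res V E \<sigma>)\<close> by blast
  qed
qed

lemma score_eq_if_differ_only_at:
  assumes "\<And>x. x \<noteq> v \<Longrightarrow> B x = B' x" and "C v \<noteq> B v" and "C v \<noteq> B' v"
  shows "score V E \<sigma> C B = score V E \<sigma> C B'"
proof -
  have "{x \<in> matches V E. C x = B x} = {x \<in> matches V E. C x = B' x}"
    using assms by (metis (mono_tags))
  then show ?thesis
    by (simp add: score_def)
qed

locale tournament =
  fixes V :: "'v set" and E :: "('v \<times> 'v) set" and s :: 'v
  assumes single_elim: "single_elim_tournament V E" and sink: "is_sink V E s"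
begin

lemma finite_V: "finite V"
  using single_elim by (simp add: single_elim_tournament_def)

lemma edges_subset: "E \<subseteq> V \<times> V"
  using single_elim by (simp add: single_elim_tournament_def)

lemma acyclic_E: "acyclic E"
  using single_elim by (simp add: single_elim_tournament_def)

lemma wf_E: "wf E"
  using finite_acyclic_wf finite_subset[OF edges_subset] finite_V acyclic_E by blast

lemma wf_converse_E: "wf (E\<inverse>)"
  using finite_acyclic_wf_converse finite_subset[OF edges_subset] finite_V acyclic_E by blast

lemma edge_irrefl: "(x, x) \<notin> E"
  using acyclic_E by (auto simp: acyclic_def)

lemma sink_in_V: "s \<in> V"
  using sink by (simp add: is_sink_def)

lemma no_edge_from_sink: "(s, y) \<notin> E"
  using sink by (simp add: is_sink_def out_nbrs_def)

lemma sink_unique: "is_sink V E v \<Longrightarrow> v = s"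
  using single_elim sink by (auto simp: single_elim_tournament_def)

lemma players_subset: "players V E \<subseteq> V"
  by (auto simp: players_def)

lemma finite_in_nbrs: "finite (in_nbrs E x)"
  using edges_subset finite_V by (auto simp: in_nbrs_def intro: finite_subset)

lemma single_valued_E: "single_valued E"
proof (rule single_valuedI)
  fix x y z assume "(x, y) \<in> E" and "(x, z) \<in> E"
  moreover from this have "x \<in> V" and "\<not> is_sink V E x"
    using edges_subset by (auto simp: is_sink_def out_nbrs_def)
  then obtain w where "out_nbrs E x = {w}"
    using single_elim by (auto simp: single_elim_tournament_def card_1_singleton_iff)
  ultimately show "y = z"
    by (auto simp: out_nbrs_def set_eq_iff)
qed

lemma rtrancl_to_sink:
  assumes "v \<in> V" shows "(v, s) \<in> E\<^sup>*"
proof (rule ccontr)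
  assume not_reach: "(v, s) \<notin> E\<^sup>*"
  obtain z where z: "(v, z) \<in> E\<^sup>*" and maximal: "\<And>y. (z, y) \<in> E \<Longrightarrow> (v, y) \<notin> E\<^sup>*"
    using wfE_min[OF wf_converse_E, of v "{w. (v, w) \<in> E\<^sup>*}"] by auto
  have "z \<in> V"
    using z assms edges_subset by (auto elim: rtranclE)
  have "z \<noteq> s"
    using z not_reach by blast
  then have "\<not> is_sink V E z"
    using sink_unique by blast
  then obtain y where "(z, y) \<in> E"
    using \<open>z \<in> V\<close> by (auto simp: is_sink_def out_nbrs_def)
  then show False
    using maximal z by (meson rtrancl_into_rtrancl)
qed

lemma ex_player_rtrancl:
  assumes "v \<in> V" shows "\<exists>p\<in>players V E. (p, v) \<in> E\<^sup>*"
proof -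
  obtain z where z: "(z, v) \<in> E\<^sup>*" and minimal: "\<And>y. (y, z) \<in> E \<Longrightarrow> (y, v) \<notin> E\<^sup>*"
    using wfE_min[OF wf_E, of v "{w. (w, v) \<in> E\<^sup>*}"] by auto
  have "z \<in> V"
    using z assms edges_subset by (auto elim: converse_rtranclE)
  moreover have "in_nbrs E z = {}"
    using minimal z by (auto simp: in_nbrs_def intro: converse_rtrancl_into_rtrancl)
  ultimately show ?thesis
    using z by (auto simp: players_def)
qed

lemma player_rtrancl_eq:
  assumes "a \<in> players V E" and "(p, a) \<in> E\<^sup>*" shows "p = a"
  using assms by (auto simp: players_def in_nbrs_def elim: rtranclE)

text \<open>Paths from \<open>p\<close> are linearly ordered since out-degrees are at most one, and a path from
  one in-neighbour of \<open>z\<close> to another would close a cycle through \<open>z\<close>.\<close>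
lemma in_nbrs_eq_if_common_ancestor:
  assumes "(u, z) \<in> E" "(u', z) \<in> E" "(p, u) \<in> E\<^sup>*" "(p, u') \<in> E\<^sup>*"
  shows "u = u'"
proof -
  have no_path: False
    if az: "(a, z) \<in> E" and bz: "(b, z) \<in> E" and "a \<noteq> b" and "(a, b) \<in> E\<^sup>*" for a b
  proof -
    from \<open>a \<noteq> b\<close> \<open>(a, b) \<in> E\<^sup>*\<close> obtain c where "(a, c) \<in> E" "(c, b) \<in> E\<^sup>*"
      by (auto elim: converse_rtranclE)
    moreover have "c = z"
      using single_valued_E \<open>(a, c) \<in> E\<close> az by (auto simp: single_valued_def)
    ultimately have "(z, z) \<in> E\<^sup>+"
      using bz by auto
    then show False
      using acyclic_E by (simp add: acyclic_def)
  qed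
  have "(u, u') \<in> E\<^sup>* \<or> (u', u) \<in> E\<^sup>*"
    using single_valued_confluent[OF single_valued_E assms(3,4)] .
  then show ?thesis
    using no_path[OF assms(1,2)] no_path[OF assms(2,1)] by blast
qed

lemma bracket_rtrancl:
  assumes "bracket V E B" and "x \<in> V"
  shows "(B x, x) \<in> E\<^sup>*"
  using assms(2)
proof (induction x rule: wf_induct_rule[OF wf_E])
  case (1 x)
  show ?case
  proof (cases "x \<in> players V E")
    case True
    then show ?thesis
      using assms(1) by (simp add: bracket_def)
  next
    case False
    with "1.prems" have "x \<in> matches V E"
      by (simp add: matches_def)
    then obtain u where "(u, x) \<in> E" and "B x = B u"
      using assms(1) by (auto simp: bracket_def in_nbrs_def)
    moreover from this have "(B u, u) \<in> E\<^sup>*"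
      using "1.IH" edges_subset by auto
    ultimately show ?thesis
      by simp
  qed
qed

lemma finite_brackets: "finite (brackets V E)"
proof -
  have "brackets V E \<subseteq> Pi\<^sub>E V (\<lambda>_. V)"
    using players_subset by (auto simp: brackets_def bracket_def PiE_def extensional_def)
  then show ?thesis
    using finite_V finite_PiE finite_subset by metis
qed

lemma card_in_nbrs_match:
  assumes "x \<in> matches V E" shows "card (in_nbrs E x) \<ge> 2"
proof -
  have "x \<in> V" and "in_nbrs E x \<noteq> {}"
    using assms by (auto simp: matches_def players_def)
  moreover from this have "card (in_nbrs E x) \<noteq> 1"
    using single_elim by (simp add: single_elim_tournament_def)
  ultimately show ?thesis
    using finite_in_nbrs[of x] by (cases "card (in_nbrs E x)") auto
qed

lemma sink_in_matches:
  assumes "card (players V E) \<ge> 2" shows "s \<in> matches V E"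
proof (rule ccontr)
  assume "s \<notin> matches V E"
  then have s_player: "s \<in> players V E"
    using sink_in_V by (simp add: matches_def)
  obtain p where "p \<in> players V E" and "p \<noteq> s"
    using assms by (rule card_ge_twoE) blast
  then show False
    using player_rtrancl_eq[OF s_player] rtrancl_to_sink players_subset by blast
qed

definition players_below :: "'v \<Rightarrow> 'v set" where
  "players_below x = {p \<in> players V E. (p, x) \<in> E\<^sup>*}"

lemma finite_players_below: "finite (players_below x)"
proof (rule finite_subset[OF _ finite_V])
  show "players_below x \<subseteq> V"
    using players_subset by (auto simp: players_below_def)
qed

lemma players_below_nonempty: "x \<in> V \<Longrightarrow> players_below x \<noteq> {}"
  using ex_player_rtrancl by (auto simp: players_below_def)

lemma card_players_below_match:
  assumes "x \<in> matches V E" shows "card (players_below x) \<ge> 2"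
proof -
  obtain u u' where "u \<in> in_nbrs E x" "u' \<in> in_nbrs E x" "u \<noteq> u'"
    using card_in_nbrs_match[OF assms] by (rule card_ge_twoE)
  then have edges: "(u, x) \<in> E" "(u', x) \<in> E" and "u \<noteq> u'"
    by (auto simp: in_nbrs_def)
  moreover have "u \<in> V" "u' \<in> V"
    using edges edges_subset by auto
  ultimately obtain p p' where "p \<in> players_below u" "p' \<in> players_below u'"
    using players_below_nonempty by blast
  then have "p \<noteq> p'" and "{p, p'} \<subseteq> players_below x"
    using in_nbrs_eq_if_common_ancestor[OF edges] \<open>u \<noteq> u'\<close> edges
    by (auto simp: players_below_def)
  then show ?thesis
    using card_mono[OF finite_players_below[of x], of "{p, p'}"] by simp
qed

lemma bracket_eqI:
  assumes "bracket V E B" "bracket V E B'" "\<And>x. x \<in> matches V E \<Longrightarrow> B x = B' x"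
  shows "B = B'"
proof
  fix x show "B x = B' x"
    using assms by (cases "x \<in> V"; cases "x \<in> players V E") (auto simp: bracket_def matches_def)
qed

lemma sink_in_matches_if_edge: "(u, s) \<in> E \<Longrightarrow> s \<in> matches V E"
  using sink_in_V by (auto simp: matches_def players_def in_nbrs_def)

text \<open>The final feeds no other match, so only its own winner condition is affected.\<close>
lemma bracket_fun_upd_sink:
  assumes "bracket V E B" and "(u, s) \<in> E"
  shows "bracket V E (B(s := B u))"
proof -
  have "u \<noteq> s" and "u \<in> V"
    using assms(2) edge_irrefl edges_subset by auto
  moreover have "s \<in> matches V E"
    using sink_in_matches_if_edge[OF assms(2)] .
  moreover have "B(s := B u) ` in_nbrs E x = B ` in_nbrs E x" for x
    using no_edge_from_sink by (auto simp: in_nbrs_def)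
  moreover have "B u \<in> B ` in_nbrs E s"
    using assms(2) by (auto simp: in_nbrs_def)
  ultimately show ?thesis
    using assms(1) sink_in_V by (auto simp: bracket_def matches_def)
qed

definition ranked_bracket :: "('v \<Rightarrow> nat) \<Rightarrow> 'v \<Rightarrow> 'v" where
  "ranked_bracket f x = (if x \<in> V then arg_min f (\<lambda>p. p \<in> players_below x) else undefined)"

lemma ranked_bracket_min:
  assumes "x \<in> V"
  shows "ranked_bracket f x \<in> players_below x"
    and "\<And>q. q \<in> players_below x \<Longrightarrow> f (ranked_bracket f x) \<le> f q"
proof -
  obtain p where "p \<in> players_below x"
    using players_below_nonempty[OF assms] by blast
  then show "ranked_bracket f x \<in> players_below x"
    and "\<And>q. q \<in> players_below x \<Longrightarrow> f (ranked_bracket f x) \<le> f q"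
    using arg_min_nat_lemma[of "\<lambda>p. p \<in> players_below x" p f] assms
    by (simp_all add: ranked_bracket_def)
qed

lemma ranked_bracket_eqI:
  assumes "inj_on f (players V E)" and "x \<in> V" and "p \<in> players_below x"
    and "\<And>q. q \<in> players_below x \<Longrightarrow> f p \<le> f q"
  shows "ranked_bracket f x = p"
proof -
  have "f (ranked_bracket f x) = f p"
    using ranked_bracket_min[OF assms(2)] assms(3,4) by (meson order_antisym)
  then show ?thesis
    using assms(1) ranked_bracket_min(1)[OF assms(2)] assms(3)
    by (auto simp: players_below_def inj_on_def)
qed

lemma bracket_ranked_bracket:
  assumes inj: "inj_on f (players V E)"
  shows "bracket V E (ranked_bracket f)"
  unfolding bracket_def
proof (intro conjI ballI allI impI)
  fix x assume "x \<notin> V"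
  then show "ranked_bracket f x = undefined"
    by (simp add: ranked_bracket_def)
next
  fix x assume "x \<in> V"
  then show "ranked_bracket f x \<in> players V E"
    using ranked_bracket_min(1) by (simp add: players_below_def)
next
  fix a assume a: "a \<in> players V E"
  then have "players_below a = {a}"
    using player_rtrancl_eq[OF a] by (auto simp: players_below_def)
  moreover have "a \<in> V"
    using a players_subset by blast
  ultimately show "ranked_bracket f a = a"
    by (intro ranked_bracket_eqI[OF inj]) simp_all
next
  fix x assume x: "x \<in> matches V E"
  then have "x \<in> V" and "x \<notin> players V E"
    by (auto simp: matches_def)
  let ?q = "ranked_bracket f x"
  have q: "?q \<in> players_below x" "\<And>r. r \<in> players_below x \<Longrightarrow> f ?q \<le> f r"
    using ranked_bracket_min[OF \<open>x \<in> V\<close>] by auto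
  then have "?q \<noteq> x"
    using \<open>x \<notin> players V E\<close> by (auto simp: players_below_def)
  moreover have "(?q, x) \<in> E\<^sup>*"
    using q(1) by (simp add: players_below_def)
  ultimately obtain u where "(?q, u) \<in> E\<^sup>*" and ux: "(u, x) \<in> E"
    by (meson rtranclE)
  then have "?q \<in> players_below u" and "u \<in> V"
    using q(1) edges_subset by (auto simp: players_below_def)
  moreover have "players_below u \<subseteq> players_below x"
    using ux by (auto simp: players_below_def)
  ultimately have "ranked_bracket f u = ?q"
    using ranked_bracket_eqI[OF inj] q(2) by blast
  then show "?q \<in> ranked_bracket f ` in_nbrs E x"
    using ux unfolding in_nbrs_def by (metis (mono_tags) image_eqI mem_Collect_eq)
qed

definition brackets_won_by :: "'v \<Rightarrow> ('v \<Rightarrow> 'v) set" where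
  "brackets_won_by p = {B \<in> brackets V E. B s = p}"

definition brackets_won_through :: "'v \<Rightarrow> ('v \<Rightarrow> 'v) set" where
  "brackets_won_through u = {B \<in> brackets V E. B s = B u}"

lemma finite_brackets_won_through: "finite (brackets_won_through u)"
  by (rule finite_subset[OF _ finite_brackets]) (auto simp: brackets_won_through_def)

lemma brackets_won_through_unique:
  assumes "(u, s) \<in> E" "(u', s) \<in> E"
    and "B \<in> brackets_won_through u" "B \<in> brackets_won_through u'"
  shows "u = u'"
proof -
  have "bracket V E B" and "B u = B u'"
    using assms(3,4) by (auto simp: brackets_won_through_def brackets_def)
  moreover have "u \<in> V" "u' \<in> V"
    using assms(1,2) edges_subset by auto
  ultimately have "(B u, u) \<in> E\<^sup>*" "(B u', u') \<in> E\<^sup>*"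
    using bracket_rtrancl by blast+
  with \<open>B u = B u'\<close> show ?thesis
    using in_nbrs_eq_if_common_ancestor[OF assms(1,2), of "B u"] by simp
qed

lemma card_brackets_won_through_le:
  assumes "(u, s) \<in> E" "(u', s) \<in> E"
  shows "card (brackets_won_through u) \<le> card (brackets_won_through u')"
proof -
  have "u \<noteq> s" "u' \<noteq> s"
    using assms edge_irrefl by auto
  let ?swap = "\<lambda>B. B(s := B u')"
  have "inj_on ?swap (brackets_won_through u)"
  proof (rule inj_onI)
    fix B1 B2
    assume B: "B1 \<in> brackets_won_through u" "B2 \<in> brackets_won_through u"
      and eq: "?swap B1 = ?swap B2"
    then have off_s: "B1 x = B2 x" if "x \<noteq> s" for x
      using that by (metis fun_upd_other)
    then have "B1 s = B2 s"
      using B \<open>u \<noteq> s\<close> by (simp add: brackets_won_through_def)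
    with off_s show "B1 = B2"
      by (intro ext) metis
  qed
  moreover have "?swap ` brackets_won_through u \<subseteq> brackets_won_through u'"
    using bracket_fun_upd_sink[OF _ assms(2)] \<open>u' \<noteq> s\<close>
    by (auto simp: brackets_won_through_def brackets_def)
  ultimately show ?thesis
    using card_inj_on_le finite_brackets_won_through by blast
qed

lemma card_brackets_eq:
  assumes "(u, s) \<in> E"
  shows "card (brackets V E) = card (in_nbrs E s) * card (brackets_won_through u)"
proof -
  have "B s \<in> B ` in_nbrs E s" if "B \<in> brackets V E" for B
    using that sink_in_matches_if_edge[OF assms] by (simp add: brackets_def bracket_def)
  then have "card (brackets V E) = card (\<Union>v\<in>in_nbrs E s. brackets_won_through v)"
    by (auto simp: brackets_won_through_def intro!: arg_cong[where f = card])
  also have "\<dots> = (\<Sum>v\<in>in_nbrs E s. card (brackets_won_through v))"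
  proof (rule card_UN_disjoint[OF finite_in_nbrs])
    show "\<forall>v\<in>in_nbrs E s. \<forall>w\<in>in_nbrs E s. v \<noteq> w \<longrightarrow>
        brackets_won_through v \<inter> brackets_won_through w = {}"
      using brackets_won_through_unique by (simp add: in_nbrs_def disjoint_iff) blast
  qed (simp add: finite_brackets_won_through)
  also have "\<dots> = (\<Sum>v\<in>in_nbrs E s. card (brackets_won_through u))"
    using card_brackets_won_through_le assms by (intro sum.cong) (auto simp: in_nbrs_def intro: antisym)
  finally show ?thesis
    by simp
qed

lemma brackets_won_through_eq_UN:
  assumes "(u, s) \<in> E"
  shows "brackets_won_through u = (\<Union>p\<in>players_below u. brackets_won_by p)"
proof (intro equalityI subsetI)
  fix B assume B: "B \<in> brackets_won_through u"
  have "u \<in> V"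
    using assms edges_subset by auto
  then have "B u \<in> players_below u"
    using B bracket_rtrancl by (auto simp: brackets_won_through_def players_below_def brackets_def bracket_def)
  with B show "B \<in> (\<Union>p\<in>players_below u. brackets_won_by p)"
    by (auto simp: brackets_won_through_def brackets_won_by_def)
next
  fix B assume "B \<in> (\<Union>p\<in>players_below u. brackets_won_by p)"
  then have B: "bracket V E B" "B s \<in> players_below u"
    by (auto simp: brackets_won_by_def brackets_def)
  then obtain u' where u': "(u', s) \<in> E" "B s = B u'"
    using sink_in_matches_if_edge[OF assms] by (auto simp: bracket_def in_nbrs_def)
  then have "(B s, u') \<in> E\<^sup>*"
    using B(1) bracket_rtrancl edges_subset by auto
  then have "u' = u"
    using in_nbrs_eq_if_common_ancestor[OF u'(1) assms] B(2) by (simp add: players_below_def)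
  with B u' show "B \<in> brackets_won_through u"
    by (simp add: brackets_won_through_def brackets_def)
qed

lemma ex_rare_champion:
  assumes "(u, s) \<in> E"
  obtains p where "p \<in> players_below u"
    and "card (in_nbrs E s) * card (players_below u) * card (brackets_won_by p) \<le> card (brackets V E)"
proof -
  obtain p where p: "p \<in> players_below u"
    and least: "\<And>q. q \<in> players_below u \<Longrightarrow> card (brackets_won_by p) \<le> card (brackets_won_by q)"
    using players_below_nonempty assms edges_subset
      ex_has_least_nat[of "\<lambda>q. q \<in> players_below u" _ "\<lambda>q. card (brackets_won_by q)"]
    by blast
  have "card (players_below u) * card (brackets_won_by p) \<le> (\<Sum>q\<in>players_below u. card (brackets_won_by q))"
    using sum_bounded_below[of "players_below u" "card (brackets_won_by p)"] least by simp
  also have "\<dots> = card (brackets_won_through u)"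
    unfolding brackets_won_through_eq_UN[OF assms]
    using finite_players_below finite_brackets
    by (intro card_UN_disjoint[symmetric]) (auto simp: brackets_won_by_def)
  finally show thesis
    using that[OF p] card_brackets_eq[OF assms] by (metis mult.assoc mult_le_mono2)
qed

lemma not_resolving_if_avoids_champions:
  assumes edges: "(u\<^sub>1, s) \<in> E" "(u\<^sub>2, s) \<in> E" and "u\<^sub>1 \<noteq> u\<^sub>2"
    and p: "p\<^sub>1 \<in> players_below u\<^sub>1" "p\<^sub>2 \<in> players_below u\<^sub>2"
    and avoids: "\<And>C. C \<in> S \<Longrightarrow> C s \<noteq> p\<^sub>1 \<and> C s \<noteq> p\<^sub>2"
  shows "\<not> resolving V E \<sigma> S"
proof -
  have not_below_u\<^sub>2: "p\<^sub>1 \<notin> players_below u\<^sub>2"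
    using in_nbrs_eq_if_common_ancestor[OF edges] p(1) \<open>u\<^sub>1 \<noteq> u\<^sub>2\<close>
    by (auto simp: players_below_def)
  then have "p\<^sub>1 \<noteq> p\<^sub>2"
    using p(2) by blast
  obtain g :: "'v \<Rightarrow> nat" where g: "inj_on g (players V E)"
    using finite_imp_inj_to_nat_seg finite_subset[OF players_subset finite_V] by metis
  define f where "f q = (if q = p\<^sub>1 then 0 else if q = p\<^sub>2 then 1 else g q + 2)" for q
  have inj: "inj_on f (players V E)"
    using g \<open>p\<^sub>1 \<noteq> p\<^sub>2\<close> by (auto simp: f_def inj_on_def)
  define B where "B = ranked_bracket f"
  have B: "bracket V E B"
    unfolding B_def using inj by (rule bracket_ranked_bracket)
  have "p\<^sub>1 \<in> players_below s"
    using p(1) edges(1) by (auto simp: players_below_def)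
  then have B_s: "B s = p\<^sub>1"
    unfolding B_def using sink_in_V by (intro ranked_bracket_eqI[OF inj]) (auto simp: f_def)
  have "B u\<^sub>2 = p\<^sub>2"
    unfolding B_def using edges(2) edges_subset p(2) not_below_u\<^sub>2
    by (intro ranked_bracket_eqI[OF inj]) (auto simp: f_def)
  define B' where "B' = B(s := B u\<^sub>2)"
  have B': "bracket V E B'" and "B' s = p\<^sub>2"
    using bracket_fun_upd_sink[OF B edges(2)] \<open>B u\<^sub>2 = p\<^sub>2\<close> by (simp_all add: B'_def)
  have "score V E \<sigma> C B = score V E \<sigma> C B'" if "C \<in> S" for C
    using avoids[OF that] B_s \<open>B' s = p\<^sub>2\<close>
    by (intro score_eq_if_differ_only_at[where v = s]) (simp_all add: B'_def)
  moreover have "B \<noteq> B'"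
    using B_s \<open>B' s = p\<^sub>2\<close> \<open>p\<^sub>1 \<noteq> p\<^sub>2\<close> by auto
  ultimately show ?thesis
    using B B' by (auto simp: resolving_def brackets_def)
qed

lemma card_brackets_less_res:
  assumes "(u\<^sub>1, s) \<in> E" "(u\<^sub>2, s) \<in> E" "u\<^sub>1 \<noteq> u\<^sub>2"
    and "p\<^sub>1 \<in> players_below u\<^sub>1" "p\<^sub>2 \<in> players_below u\<^sub>2"
  shows "card (brackets V E)
    < res V E \<sigma> + card (brackets_won_by p\<^sub>1) + card (brackets_won_by p\<^sub>2)"
proof -
  define S\<^sub>0 where "S\<^sub>0 = brackets V E - (brackets_won_by p\<^sub>1 \<union> brackets_won_by p\<^sub>2)"
  have "brackets V E = S\<^sub>0 \<union> brackets_won_by p\<^sub>1 \<union> brackets_won_by p\<^sub>2"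
    by (auto simp: S\<^sub>0_def brackets_won_by_def)
  then have "card (brackets V E)
      \<le> card (S\<^sub>0 \<union> brackets_won_by p\<^sub>1) + card (brackets_won_by p\<^sub>2)"
    by (metis card_Un_le)
  also have "\<dots> \<le> card S\<^sub>0 + card (brackets_won_by p\<^sub>1) + card (brackets_won_by p\<^sub>2)"
    using card_Un_le by simp
  also have "card S\<^sub>0 < res V E \<sigma>"
  proof (rule card_less_res[OF finite_brackets])
    show "S\<^sub>0 \<subseteq> brackets V E"
      by (auto simp: S\<^sub>0_def)
    show "\<not> resolving V E \<sigma> S" if "S \<subseteq> S\<^sub>0" for S
      using that by (intro not_resolving_if_avoids_champions[OF assms])
        (auto simp: S\<^sub>0_def brackets_won_by_def)
  qed
  finally show ?thesis
    by simp
qed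

lemma res_pos:
  assumes "s \<in> matches V E" shows "res V E \<sigma> > 0"
proof -
  obtain u\<^sub>1 u\<^sub>2 where u: "u\<^sub>1 \<in> in_nbrs E s" "u\<^sub>2 \<in> in_nbrs E s" "u\<^sub>1 \<noteq> u\<^sub>2"
    using card_in_nbrs_match[OF assms] by (rule card_ge_twoE)
  then have edges: "(u\<^sub>1, s) \<in> E" "(u\<^sub>2, s) \<in> E"
    by (simp_all add: in_nbrs_def)
  then obtain p\<^sub>1 p\<^sub>2 where p: "p\<^sub>1 \<in> players_below u\<^sub>1" "p\<^sub>2 \<in> players_below u\<^sub>2"
    using players_below_nonempty edges_subset by blast
  have "card ({} :: ('v \<Rightarrow> 'v) set) < res V E \<sigma>"
  proof (rule card_less_res[OF finite_brackets])
    show "\<not> resolving V E \<sigma> S" if "S \<subseteq> {}" for S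
      using that not_resolving_if_avoids_champions[OF edges u(3) p] by blast
  qed simp
  then show ?thesis
    by simp
qed

lemma card_brackets_le_if_semifinalists_players:
  assumes "s \<in> matches V E" and semifinalists: "in_nbrs E s \<subseteq> players V E"
  shows "card (brackets V E) \<le> card (in_nbrs E s)"
proof -
  have V: "V \<subseteq> insert s (in_nbrs E s)"
  proof
    fix v assume "v \<in> V"
    show "v \<in> insert s (in_nbrs E s)"
    proof (cases "v = s")
      case False
      with rtrancl_to_sink[OF \<open>v \<in> V\<close>] obtain y where "(v, y) \<in> E\<^sup>*" "(y, s) \<in> E"
        by (meson rtranclE)
      moreover from this have "y \<in> players V E"
        using semifinalists by (auto simp: in_nbrs_def)
      ultimately show ?thesis
        using player_rtrancl_eq by (auto simp: in_nbrs_def)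
    qed simp
  qed
  have "inj_on (\<lambda>B. B s) (brackets V E)"
  proof (rule inj_onI)
    fix B B' assume "B \<in> brackets V E" "B' \<in> brackets V E" "B s = B' s"
    moreover have "matches V E \<subseteq> {s}"
      using V semifinalists by (auto simp: matches_def)
    ultimately show "B = B'"
      by (intro bracket_eqI) (auto simp: brackets_def)
  qed
  moreover have "(\<lambda>B. B s) ` brackets V E \<subseteq> in_nbrs E s"
    using V assms(1) sink_in_V players_subset
    by (fastforce simp: brackets_def bracket_def matches_def)
  ultimately show ?thesis
    using card_inj_on_le finite_in_nbrs by blast
qed

lemma obtain_semifinalists:
  assumes "s \<in> matches V E"
  obtains u\<^sub>1 u\<^sub>2 where "(u\<^sub>1, s) \<in> E" "(u\<^sub>2, s) \<in> E" "u\<^sub>1 \<noteq> u\<^sub>2"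
    and "u\<^sub>2 \<in> matches V E \<or> in_nbrs E s \<subseteq> players V E"
proof (cases "in_nbrs E s \<subseteq> players V E")
  case True
  obtain u\<^sub>1 u\<^sub>2 where "u\<^sub>1 \<in> in_nbrs E s" "u\<^sub>2 \<in> in_nbrs E s" "u\<^sub>1 \<noteq> u\<^sub>2"
    using card_in_nbrs_match[OF assms] by (rule card_ge_twoE)
  with True show thesis
    using that by (simp add: in_nbrs_def)
next
  case False
  then obtain u\<^sub>2 where u\<^sub>2: "(u\<^sub>2, s) \<in> E" "u\<^sub>2 \<in> matches V E"
    using edges_subset by (auto simp: in_nbrs_def matches_def)
  obtain a b where "a \<in> in_nbrs E s" "b \<in> in_nbrs E s" "a \<noteq> b"
    using card_in_nbrs_match[OF assms] by (rule card_ge_twoE)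
  then obtain u\<^sub>1 where "(u\<^sub>1, s) \<in> E" "u\<^sub>1 \<noteq> u\<^sub>2"
    by (auto simp: in_nbrs_def)
  with u\<^sub>2 show thesis
    using that by blast
qed

lemma obtain_rare_champions:
  assumes s: "s \<in> matches V E"
  obtains u\<^sub>1 u\<^sub>2 p\<^sub>1 p\<^sub>2 where "(u\<^sub>1, s) \<in> E" "(u\<^sub>2, s) \<in> E" "u\<^sub>1 \<noteq> u\<^sub>2"
    and "p\<^sub>1 \<in> players_below u\<^sub>1" "p\<^sub>2 \<in> players_below u\<^sub>2"
    and "4 * card (brackets_won_by p\<^sub>1) + 4 * card (brackets_won_by p\<^sub>2) \<le> 3 * card (brackets V E)
      \<or> card (brackets V E) \<le> 2"
proof -
  let ?k = "card (in_nbrs E s)" and ?N = "card (brackets V E)"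
  obtain u\<^sub>1 u\<^sub>2 where edges: "(u\<^sub>1, s) \<in> E" "(u\<^sub>2, s) \<in> E" and "u\<^sub>1 \<noteq> u\<^sub>2"
    and u\<^sub>2: "u\<^sub>2 \<in> matches V E \<or> in_nbrs E s \<subseteq> players V E"
    using obtain_semifinalists[OF s] by metis
  obtain p\<^sub>1 where p\<^sub>1: "p\<^sub>1 \<in> players_below u\<^sub>1"
    and bound\<^sub>1: "?k * card (players_below u\<^sub>1) * card (brackets_won_by p\<^sub>1) \<le> ?N"
    using ex_rare_champion[OF edges(1)] by metis
  obtain p\<^sub>2 where p\<^sub>2: "p\<^sub>2 \<in> players_below u\<^sub>2"
    and bound\<^sub>2: "?k * card (players_below u\<^sub>2) * card (brackets_won_by p\<^sub>2) \<le> ?N"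
    using ex_rare_champion[OF edges(2)] by metis
  have "card (players_below u\<^sub>1) \<ge> 1" "card (players_below u\<^sub>2) \<ge> 1"
    using finite_players_below p\<^sub>1 p\<^sub>2 by (auto simp: Suc_le_eq card_gt_0_iff)
  then have a\<^sub>1: "?k * card (brackets_won_by p\<^sub>1) \<le> ?N" and a\<^sub>2: "?k * card (brackets_won_by p\<^sub>2) \<le> ?N"
    using le_trans[OF mult_le_mono1[OF mult_le_mono2[of 1]] bound\<^sub>1]
      le_trans[OF mult_le_mono1[OF mult_le_mono2[of 1]] bound\<^sub>2] by simp_all
  consider "?k \<ge> 3" | "?k = 2" "u\<^sub>2 \<in> matches V E" | "?k = 2" "in_nbrs E s \<subseteq> players V E"
    using card_in_nbrs_match[OF s] u\<^sub>2 by linarith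
  then have "4 * card (brackets_won_by p\<^sub>1) + 4 * card (brackets_won_by p\<^sub>2) \<le> 3 * ?N \<or> ?N \<le> 2"
  proof cases
    case 1
    have "3 * card (brackets_won_by p\<^sub>1) \<le> ?N" "3 * card (brackets_won_by p\<^sub>2) \<le> ?N"
      using le_trans[OF mult_le_mono1[OF 1] a\<^sub>1] le_trans[OF mult_le_mono1[OF 1] a\<^sub>2] .
    then show ?thesis
      by linarith
  next
    case 2
    have "2 * card (brackets_won_by p\<^sub>2) \<le> card (players_below u\<^sub>2) * card (brackets_won_by p\<^sub>2)"
      using card_players_below_match[OF 2(2)] by (rule mult_le_mono1)
    then have "2 * (2 * card (brackets_won_by p\<^sub>2)) \<le> ?N"
      using le_trans[OF mult_le_mono2 bound\<^sub>2[unfolded 2(1) mult.assoc]] by blast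
    with a\<^sub>1[unfolded 2(1)] show ?thesis
      by linarith
  next
    case 3
    then show ?thesis
      using card_brackets_le_if_semifinalists_players[OF s] by simp
  qed
  with edges \<open>u\<^sub>1 \<noteq> u\<^sub>2\<close> p\<^sub>1 p\<^sub>2 show thesis
    using that by blast
qed

lemma card_brackets_less_four_res:
  assumes "card (players V E) \<ge> 2"
  shows "card (brackets V E) < 4 * res V E \<sigma>"
proof -
  have s: "s \<in> matches V E"
    using sink_in_matches[OF assms] .
  obtain u\<^sub>1 u\<^sub>2 p\<^sub>1 p\<^sub>2 where champions: "(u\<^sub>1, s) \<in> E" "(u\<^sub>2, s) \<in> E" "u\<^sub>1 \<noteq> u\<^sub>2"
      "p\<^sub>1 \<in> players_below u\<^sub>1" "p\<^sub>2 \<in> players_below u\<^sub>2"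
    and rare: "4 * card (brackets_won_by p\<^sub>1) + 4 * card (brackets_won_by p\<^sub>2) \<le> 3 * card (brackets V E)
      \<or> card (brackets V E) \<le> 2"
    by (rule obtain_rare_champions[OF s])
  have "card (brackets V E) < res V E \<sigma> + card (brackets_won_by p\<^sub>1) + card (brackets_won_by p\<^sub>2)"
    using card_brackets_less_res[OF champions] .
  with rare res_pos[OF s, of \<sigma>] show ?thesis
    by linarith
qed

end

theorem corollaryA3:
  fixes V :: "'v set" and E :: "('v \<times> 'v) set" and \<sigma> :: "'v \<Rightarrow> real"
  assumes "single_elim_tournament V E"
    and "card (players V E) \<ge> 2"
    and "scoring_system V E \<sigma>"
  shows "real (res V E \<sigma>) > real (card (brackets V E)) / 4"
proof -
  obtain s where "is_sink V E s"
    using assms(1) unfolding single_elim_tournament_def by blast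
  with assms(1) interpret tournament V E s
    by unfold_locales
  have "card (brackets V E) < 4 * res V E \<sigma>"
    using card_brackets_less_four_res[OF assms(2)] .
  then show ?thesis
    by (simp add: field_simps)
qed

end
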